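(* Let $D\le F\le G$ be locally finite graphs ($D$ a subgraph of $F$, $F$ a subgraph of $G$). Then any two of the following statements imply the third: (1) $D$ is faithful to $F$; (2) $F$ is faithful to $G$; (3) $D$ is faithful to $G$.
   Context: A ray is a one-way infinite path; two rays of a graph $H$ are equivalent in $H$ if for every finite $S\subseteq V(H)$ some component of $H-S$ contains tails of both; the classes are the ends of $H$. A subgraph $A$ of $B$ is faithful to $B$ if (i) every end of $B$ contains a ray of $A$, and (ii) any two rays of $A$ are equivalent in $A$ if and only if they are equivalent in $B$. *)

theory Defs
  imports Main
begin

text \<open>Simple undirected graphs: a vertex set and a set of 2-element edges.\<close>

type_synonym 'a graph = "'a set \<times> 'a set set"

definition verts :: "'a graph \<Rightarrow> 'a set" where "verts H = fst H"
definition edges :: "'a graph \<Rightarrow> 'a set set" where "edges H = snd H"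

definition graph :: "'a graph \<Rightarrow> bool" where
  "graph H \<longleftrightarrow> (\<forall>e\<in>edges H. \<exists>u v. e = {u, v} \<and> u \<noteq> v \<and> u \<in> verts H \<and> v \<in> verts H)"

definition locally_finite :: "'a graph \<Rightarrow> bool" where
  "locally_finite H \<longleftrightarrow> (\<forall>v\<in>verts H. finite {u. {u, v} \<in> edges H})"

definition subgraph :: "'a graph \<Rightarrow> 'a graph \<Rightarrow> bool" where
  "subgraph A B \<longleftrightarrow> graph A \<and> graph B \<and> verts A \<subseteq> verts B \<and> edges A \<subseteq> edges B"

text \<open>A ray of H: a one-way infinite path, given by its injective vertex sequence.\<close>
definition is_ray :: "'a graph \<Rightarrow> (nat \<Rightarrow> 'a) \<Rightarrow> bool" where
  "is_ray H r \<longleftrightarrow> inj r \<and> (\<forall>i. r i \<in> verts H) \<and> (\<forall>i. {r i, r (Suc i)} \<in> edges H)"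

definition adj_avoid :: "'a graph \<Rightarrow> 'a set \<Rightarrow> 'a \<Rightarrow> 'a \<Rightarrow> bool" where
  "adj_avoid H S x y \<longleftrightarrow> x \<in> verts H - S \<and> y \<in> verts H - S \<and> {x, y} \<in> edges H"

definition same_comp :: "'a graph \<Rightarrow> 'a set \<Rightarrow> 'a \<Rightarrow> 'a \<Rightarrow> bool" where
  "same_comp H S x y \<longleftrightarrow> x \<in> verts H - S \<and> y \<in> verts H - S \<and> (adj_avoid H S)\<^sup>*\<^sup>* x y"

definition ray_equiv :: "'a graph \<Rightarrow> (nat \<Rightarrow> 'a) \<Rightarrow> (nat \<Rightarrow> 'a) \<Rightarrow> bool" where
  "ray_equiv H r s \<longleftrightarrow>
     (\<forall>S. finite S \<and> S \<subseteq> verts H \<longrightarrow>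
        (\<exists>n. \<forall>i\<ge>n. \<forall>j\<ge>n. same_comp H S (r i) (s j)))"

definition faithful :: "'a graph \<Rightarrow> 'a graph \<Rightarrow> bool" where
  "faithful A B \<longleftrightarrow>
     (\<forall>r. is_ray B r \<longrightarrow> (\<exists>s. is_ray A s \<and> ray_equiv B r s)) \<and>
     (\<forall>r s. is_ray A r \<and> is_ray A s \<longrightarrow> (ray_equiv A r s \<longleftrightarrow> ray_equiv B r s))"

end

theory Submission
  imports Defs
begin

text \<open>Ray equivalence is an equivalence relation which can only become coarser when passing
  to a supergraph, since a finite separator of the supergraph meets the subgraph in a finite
  separator. Each of the three implications is then a chase along rays: ends are transported
  downwards by choosing equivalent rays of the smaller graph, and equivalence of rays of the
  middle graph F is tested on equivalent rays of D.\<close>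

lemma is_ray_subgraph: "subgraph A B \<Longrightarrow> is_ray A r \<Longrightarrow> is_ray B r"
  unfolding is_ray_def subgraph_def by auto

lemma symp_adj_avoid: "symp (adj_avoid H S)"
  unfolding symp_def adj_avoid_def by (simp add: insert_commute)

lemma same_comp_sym: "same_comp H S x y \<Longrightarrow> same_comp H S y x"
  unfolding same_comp_def by (blast intro: sympD[OF symp_rtranclp[OF symp_adj_avoid]])

lemma same_comp_trans: "same_comp H S x y \<Longrightarrow> same_comp H S y z \<Longrightarrow> same_comp H S x z"
  unfolding same_comp_def using rtranclp_trans[of "adj_avoid H S" x y z] by simp

lemma same_comp_subgraph:
  assumes "subgraph A B" and "same_comp A (S \<inter> verts A) x y"
  shows "same_comp B S x y"
proof -
  have "adj_avoid A (S \<inter> verts A) \<le> adj_avoid B S"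
    using assms(1) unfolding subgraph_def adj_avoid_def by auto
  then have "(adj_avoid B S)\<^sup>*\<^sup>* x y"
    using assms(2) rtranclp_mono unfolding same_comp_def by blast
  then show ?thesis
    using assms unfolding same_comp_def subgraph_def by auto
qed

lemma ray_equiv_sym:
  assumes "ray_equiv H r s"
  shows "ray_equiv H s r"
  unfolding ray_equiv_def
proof (intro allI impI)
  fix S assume "finite S \<and> S \<subseteq> verts H"
  then obtain n where "\<forall>i\<ge>n. \<forall>j\<ge>n. same_comp H S (r i) (s j)"
    using assms unfolding ray_equiv_def by blast
  then show "\<exists>n. \<forall>i\<ge>n. \<forall>j\<ge>n. same_comp H S (s i) (r j)"
    by (blast intro: same_comp_sym)
qed

lemma ray_equiv_trans:
  assumes "ray_equiv H r s" and "ray_equiv H s t"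
  shows "ray_equiv H r t"
  unfolding ray_equiv_def
proof (intro allI impI)
  fix S assume S: "finite S \<and> S \<subseteq> verts H"
  obtain m where m: "\<forall>i\<ge>m. \<forall>j\<ge>m. same_comp H S (r i) (s j)"
    using assms(1) S unfolding ray_equiv_def by blast
  obtain n where n: "\<forall>i\<ge>n. \<forall>j\<ge>n. same_comp H S (s i) (t j)"
    using assms(2) S unfolding ray_equiv_def by blast
  show "\<exists>k. \<forall>i\<ge>k. \<forall>j\<ge>k. same_comp H S (r i) (t j)"
  proof (intro exI allI impI)
    fix i j assume "max m n \<le> i" "max m n \<le> j"
    then show "same_comp H S (r i) (t j)"
      using m n same_comp_trans[of H S "r i" "s (max m n)" "t j"] by simp
  qed
qed

lemma ray_equiv_subgraph:
  assumes "subgraph A B" and "ray_equiv A r s"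
  shows "ray_equiv B r s"
  unfolding ray_equiv_def
proof (intro allI impI)
  fix S assume "finite S \<and> S \<subseteq> verts B"
  then have "finite (S \<inter> verts A) \<and> S \<inter> verts A \<subseteq> verts A" by simp
  then obtain n where "\<forall>i\<ge>n. \<forall>j\<ge>n. same_comp A (S \<inter> verts A) (r i) (s j)"
    using assms(2) unfolding ray_equiv_def by blast
  then show "\<exists>n. \<forall>i\<ge>n. \<forall>j\<ge>n. same_comp B S (r i) (s j)"
    using same_comp_subgraph[OF assms(1)] by blast
qed

lemma faithfulI:
  assumes "\<And>r. is_ray B r \<Longrightarrow> \<exists>s. is_ray A s \<and> ray_equiv B r s"
    and "\<And>r s. is_ray A r \<Longrightarrow> is_ray A s \<Longrightarrow> ray_equiv A r s \<longleftrightarrow> ray_equiv B r s"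
  shows "faithful A B"
  using assms unfolding faithful_def by blast

lemma faithful_obtain_ray:
  assumes "faithful A B" and "is_ray B r"
  obtains s where "is_ray A s" and "ray_equiv B r s"
  using assms unfolding faithful_def by blast

lemma faithful_ray_equiv_iff:
  "faithful A B \<Longrightarrow> is_ray A r \<Longrightarrow> is_ray A s \<Longrightarrow> ray_equiv A r s \<longleftrightarrow> ray_equiv B r s"
  unfolding faithful_def by blast

lemma faithful_trans:
  assumes DF: "subgraph D F" and FG: "subgraph F G"
    and "faithful D F" and "faithful F G"
  shows "faithful D G"
proof (rule faithfulI)
  fix r assume "is_ray G r"
  with \<open>faithful F G\<close> obtain s where s: "is_ray F s" "ray_equiv G r s"
    by (rule faithful_obtain_ray)
  from \<open>faithful D F\<close> s(1) obtain t where t: "is_ray D t" "ray_equiv F s t"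
    by (rule faithful_obtain_ray)
  have "ray_equiv G r t"
    using ray_equiv_trans[OF s(2) ray_equiv_subgraph[OF FG t(2)]] .
  with t(1) show "\<exists>t. is_ray D t \<and> ray_equiv G r t" by blast
next
  fix r s assume "is_ray D r" "is_ray D s"
  then show "ray_equiv D r s \<longleftrightarrow> ray_equiv G r s"
    using faithful_ray_equiv_iff[OF \<open>faithful D F\<close>] faithful_ray_equiv_iff[OF \<open>faithful F G\<close>]
      is_ray_subgraph[OF DF] by simp
qed

lemma faithful_cancel_left:
  assumes DF: "subgraph D F" and FG: "subgraph F G"
    and "faithful D F" and "faithful D G"
  shows "faithful F G"
proof (rule faithfulI)
  fix r assume "is_ray G r"
  with \<open>faithful D G\<close> obtain s where "is_ray D s" "ray_equiv G r s"
    by (rule faithful_obtain_ray)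
  then show "\<exists>s. is_ray F s \<and> ray_equiv G r s"
    using is_ray_subgraph[OF DF] by blast
next
  fix r s assume rs: "is_ray F r" "is_ray F s"
  show "ray_equiv F r s \<longleftrightarrow> ray_equiv G r s"
  proof
    assume "ray_equiv F r s"
    then show "ray_equiv G r s" by (rule ray_equiv_subgraph[OF FG])
  next
    assume rs_G: "ray_equiv G r s"
    obtain r' where r': "is_ray D r'" "ray_equiv F r r'"
      using \<open>faithful D F\<close> rs(1) by (rule faithful_obtain_ray)
    obtain s' where s': "is_ray D s'" "ray_equiv F s s'"
      using \<open>faithful D F\<close> rs(2) by (rule faithful_obtain_ray)
    have "ray_equiv G r' s'"
      using ray_equiv_subgraph[OF FG r'(2)] rs_G ray_equiv_subgraph[OF FG s'(2)]
      by (meson ray_equiv_sym ray_equiv_trans)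
    then have "ray_equiv F r' s'"
      using faithful_ray_equiv_iff[OF \<open>faithful D F\<close> r'(1) s'(1)]
        faithful_ray_equiv_iff[OF \<open>faithful D G\<close> r'(1) s'(1)] by simp
    then show "ray_equiv F r s"
      using r'(2) s'(2) by (meson ray_equiv_sym ray_equiv_trans)
  qed
qed

lemma faithful_cancel_right:
  assumes DF: "subgraph D F" and FG: "subgraph F G"
    and "faithful F G" and "faithful D G"
  shows "faithful D F"
proof (rule faithfulI)
  fix r assume r: "is_ray F r"
  from \<open>faithful D G\<close> is_ray_subgraph[OF FG r] obtain s where s: "is_ray D s" "ray_equiv G r s"
    by (rule faithful_obtain_ray)
  have "ray_equiv F r s"
    using faithful_ray_equiv_iff[OF \<open>faithful F G\<close> r is_ray_subgraph[OF DF s(1)]] s(2) by simp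
  with s(1) show "\<exists>s. is_ray D s \<and> ray_equiv F r s" by blast
next
  fix r s assume "is_ray D r" "is_ray D s"
  then show "ray_equiv D r s \<longleftrightarrow> ray_equiv F r s"
    using faithful_ray_equiv_iff[OF \<open>faithful D G\<close>] faithful_ray_equiv_iff[OF \<open>faithful F G\<close>]
      is_ray_subgraph[OF DF] by simp
qed

theorem lemma5:
  fixes D F G :: "'a graph"
  assumes "locally_finite D" and "locally_finite F" and "locally_finite G"
    and "subgraph D F" and "subgraph F G"
  shows "(faithful D F \<and> faithful F G \<longrightarrow> faithful D G)
       \<and> (faithful D F \<and> faithful D G \<longrightarrow> faithful F G)
       \<and> (faithful F G \<and> faithful D G \<longrightarrow> faithful D F)"
  using faithful_trans[OF assms(4,5)] faithful_cancel_left[OF assms(4,5)]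
    faithful_cancel_right[OF assms(4,5)]
  by blast

end
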